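(* Let $p$ be an odd prime and let $s$ be an integer with $0\le s\le\frac{p-1}{2}$. Then $$\sum_{k=0}^{\frac{p-1}{2}}\frac{(q;q^2)_k\,(q;q^2)_{k+s}}{(q^2;q^2)_k\,(q^2;q^2)_{k+s}}\equiv \left(\frac{-1}{p}\right)q^{\frac{1-p^2}{4}}\pmod{[p]^2}.$$
   Context: For an indeterminate $q$ and an integer $n\ge 0$: $(a;q)_0=1$ and $(a;q)_n=(1-a)(1-aq)\cdots(1-aq^{n-1})$. For a positive integer $p$, $[p]=\frac{1-q^p}{1-q}=1+q+\cdots+q^{p-1}$. For a prime $p$, $[p]$ is irreducible in $\mathbb{Q}[q]$; for rational functions $A,B$ of $q$ whose denominators are coprime to $[p]$, $A\equiv B\pmod{[p]^r}$ means that $A-B$, written in lowest terms, has numerator divisible by $[p]^r$ in $\mathbb{Q}[q]$. $\left(\frac{\cdot}{p}\right)$ denotes the Legendre symbol modulo $p$. *)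

theory Defs
  imports "HOL-Computational_Algebra.Computational_Algebra" "HOL-Computational_Algebra.Field_as_Ring" "HOL-Number_Theory.Number_Theory"
begin

type_synonym ratfun = "rat poly fract"

definition qv :: ratfun where
  "qv = to_fract [:0, 1:]"

definition qpoch :: "ratfun \<Rightarrow> ratfun \<Rightarrow> nat \<Rightarrow> ratfun" where
  "qpoch a x n = (\<Prod>i<n. (1 - a * x ^ i))"

definition qint :: "nat \<Rightarrow> rat poly" where
  "qint p = (\<Sum>i<p. [:0, 1:] ^ i)"

definition qcong :: "ratfun \<Rightarrow> ratfun \<Rightarrow> rat poly \<Rightarrow> bool" where
  "qcong A B M \<longleftrightarrow> coprime (snd (quot_of_fract A)) M \<and> coprime (snd (quot_of_fract B)) M
      \<and> M dvd fst (quot_of_fract (A - B))"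

end

theory Submission
  imports Defs
begin

text \<open>
  Proof by creative microscoping. Put \<open>Q = q^2\<close>, \<open>n = (p-1)/2\<close> and
  \<open>S_s(a,b) = \<Sum>_{k \<le> n} (a;Q)_k (b;Q)_{k+s} / ((Q;Q)_k (Q;Q)_{k+s})\<close>,
  so that the sum in the theorem is \<open>S_s(q,q)\<close>. With \<open>u = q^p\<close> the deformed parameters
  \<open>(uq, q/u) = (Q^{n+1}, Q^{-n})\<close> make the sum terminate, and telescoping in \<open>s\<close> yields
  \<open>S_s(Q^{n+1}, Q^{-n}) = S_s(Q^{-n}, Q^{n+1}) = (-1)^n q^{-n(n+1)}\<close>.
  On the other hand, replacing \<open>x\<close> by \<open>ux\<close> and by \<open>x/u\<close> in a factor \<open>1 - x\<close> changes it by
  multiples of \<open>1 - u\<close> whose sum is a multiple of \<open>(1-u)^2\<close>; this "congruence triple"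
  structure survives sums and products of elements whose denominators are prime to \<open>[p]\<close>.
  Hence \<open>2 S_s(q,q) \<equiv> 2 (-1)^n q^{-n(n+1)}\<close> modulo \<open>(1 - q^p)^2 = (1-q)^2 [p]^2\<close>, and
  Euler's criterion identifies \<open>(-1)^n q^{-n(n+1)}\<close> with \<open>(-1/p) q^{(1-p^2)/4}\<close>.
\<close>

section \<open>Terminating \<open>q\<close>-series\<close>

lemma qpoch_0 [simp]: "qpoch a x 0 = 1"
  by (simp add: qpoch_def)

lemma qpoch_Suc [simp]: "qpoch a x (Suc n) = qpoch a x n * (1 - a * x ^ n)"
  by (simp add: qpoch_def)

lemma qpoch_self_nonzero:
  assumes "\<forall>m>0. Q ^ m \<noteq> (1::ratfun)"
  shows "qpoch Q Q j \<noteq> 0"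
  using assms unfolding qpoch_def by (auto simp flip: power_Suc)

text \<open>\<open>(Q^{-n};Q)_m\<close> vanishes as soon as \<open>m > n\<close>: the factor \<open>1 - Q^{-n} Q^n\<close> occurs.\<close>

lemma qpoch_inverse_power_zero:
  assumes "Q \<noteq> (0::ratfun)" "n < m"
  shows "qpoch (inverse (Q ^ n)) Q m = 0"
  using assms unfolding qpoch_def by (auto simp: prod_zero_iff intro!: bexI[of _ n])

text \<open>Closed form of \<open>(Q^{-n};Q)_n\<close> for \<open>Q = z^2\<close>: reversing the product gives
  \<open>\<Prod>i<n. (1 - Q^{-(i+1)}) = (-1)^n (Q;Q)_n / z^{n(n+1)}\<close>.\<close>

lemma prod_one_minus_inverse_powers:
  fixes z :: ratfun
  assumes "z \<noteq> 0"
  shows "(\<Prod>i<n. (1 - inverse ((z^2)^Suc i))) = (-1)^n * qpoch (z^2) (z^2) n / z^(n*(n+1))"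
proof (induction n)
  case 0
  then show ?case by simp
next
  case (Suc n)
  have "Suc n * (Suc n + 1) = n*(n+1) + 2*Suc n" by simp
  then have "z^(Suc n * (Suc n + 1)) = z^(n*(n+1)) * (z^2)^Suc n"
    by (simp only: power_add power_mult)
  moreover have "(-1)^n * qpoch (z^2) (z^2) n / z^(n*(n+1)) * (1 - inverse ((z^2)^Suc n))
      = (-1)^Suc n * (qpoch (z^2) (z^2) n * (1 - z^2 * (z^2)^n)) / (z^(n*(n+1)) * (z^2)^Suc n)"
    using assms by (simp add: field_simps)
  ultimately show ?case using Suc.IH by simp
qed

lemma qpoch_inverse_power_closed_form:
  fixes z :: ratfun
  assumes "z \<noteq> 0"
  shows "qpoch (inverse ((z^2)^n)) (z^2) n = (-1)^n * qpoch (z^2) (z^2) n / z^(n*(n+1))"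
proof -
  have "qpoch (inverse ((z^2)^n)) (z^2) n = (\<Prod>i<n. (1 - inverse ((z^2)^n) * (z^2)^(n - Suc i)))"
    unfolding qpoch_def by (rule prod.nat_diff_reindex[symmetric])
  also have "\<dots> = (\<Prod>i<n. (1 - inverse ((z^2)^Suc i)))"
  proof (rule prod.cong[OF refl])
    fix i assume "i \<in> {..<n}"
    then have "n - Suc i + Suc i = n" by simp
    then have "(z^2)^n = (z^2)^(n - Suc i) * (z^2)^Suc i"
      by (metis power_add)
    then show "1 - inverse ((z^2)^n) * (z^2)^(n - Suc i) = 1 - inverse ((z^2)^Suc i)"
      using assms by (simp add: field_simps)
  qed
  finally show ?thesis using prod_one_minus_inverse_powers[OF assms] by simp
qed

definition chu_term :: "ratfun \<Rightarrow> ratfun \<Rightarrow> ratfun \<Rightarrow> nat \<Rightarrow> nat \<Rightarrow> ratfun" where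
  "chu_term a b Q s k = qpoch a Q k * qpoch b Q (k + s) / (qpoch Q Q k * qpoch Q Q (k + s))"

text \<open>The field identity behind one telescoping step: with \<open>x = Q^m\<close>, \<open>y = Q^s\<close> and
  \<open>A, B, C, D\<close> the four Pochhammer products of \<open>chu_term a b Q s m\<close>, it relates the
  \<open>(m+1)\<close>-st and \<open>m\<close>-th partial sums below.\<close>

lemma telescope_step_identity:
  fixes A B C D x y a b Q :: "'a::field"
  assumes Q: "a * b = Q"
    and nz: "C \<noteq> 0" "D \<noteq> 0" "1 - a \<noteq> 0" "1 - b * y \<noteq> 0" "1 - Q * x \<noteq> 0" "1 - Q * (x * y) \<noteq> 0"
  shows "(A * (1 - a * x) * (B * (1 - b * (x * y))) / (C * (1 - Q * x) * (D * (1 - Q * (x * y)))))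
          * (1 - Q * x) * (y * (b - Q) / ((1 - a) * (1 - b * y)))
       - (A * B / (C * D)) * (1 - x) * (y * (b - Q) / ((1 - a) * (1 - b * y)))
     = A * B / (C * D) - A * (B * (1 - b * (x * y))) / (C * (D * (1 - Q * (x * y))))"
proof -
  define g where "g = y * (b - Q) / ((1 - a) * (1 - b * y))"
  define E where "E = A * B / (C * D)"
  define w where "w = 1 - Q * x"
  define z where "z = 1 - Q * (x * y)"
  have w: "w \<noteq> 0" and z: "z \<noteq> 0" using nz unfolding w_def z_def by auto
  have key: "(1 - a * x) * (1 - b * (x * y)) - (1 - x) * z = x * ((1 - a) * (1 - b * y))"
    unfolding Q[symmetric] z_def by (simp add: algebra_simps)
  have l1: "(A * (1 - a * x) * (B * (1 - b * (x * y))) / (C * w * (D * z))) * w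
      = E * ((1 - a * x) * (1 - b * (x * y))) / z"
    using nz w z unfolding E_def by (simp add: field_simps)
  have l2: "A * (B * (1 - b * (x * y))) / (C * (D * z)) = E * (1 - b * (x * y)) / z"
    unfolding E_def by (simp add: field_simps)
  have "E * ((1 - a * x) * (1 - b * (x * y))) / z * g - E * (1 - x) * g
      = E * g * (((1 - a * x) * (1 - b * (x * y)) - (1 - x) * z) / z)"
    using z by (simp add: field_simps)
  also have "\<dots> = E * g * (x * ((1 - a) * (1 - b * y))) / z"
    by (simp add: key)
  also have "\<dots> = E * (x * (g * ((1 - a) * (1 - b * y)))) / z"
    by (simp add: ac_simps)
  also have "g * ((1 - a) * (1 - b * y)) = y * (b - Q)"
    unfolding g_def using nz by simp
  also have "E * (x * (y * (b - Q))) / z = E - E * (1 - b * (x * y)) / z"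
    using z Q unfolding z_def by (simp add: field_simps)
  finally show ?thesis
    unfolding l1 l2 g_def[symmetric] E_def[symmetric] w_def[symmetric] z_def[symmetric] .
qed

lemma chu_term_telescope:
  assumes ab: "a * b = Q" and a1: "a \<noteq> 1" and bs: "b * Q ^ s \<noteq> 1"
    and H: "\<forall>m>0. Q ^ m \<noteq> (1::ratfun)"
  shows "(\<Sum>k<m. chu_term a b Q s k - chu_term a b Q (Suc s) k)
     = chu_term a b Q s m * (1 - Q ^ m) * (Q ^ s * (b - Q) / ((1 - a) * (1 - b * Q ^ s)))"
proof (induction m)
  case 0
  then show ?case by simp
next
  case (Suc m)
  let ?g = "Q ^ s * (b - Q) / ((1 - a) * (1 - b * Q ^ s))"
  have n1: "1 - Q * Q ^ m \<noteq> 0" and n2: "1 - Q * (Q ^ m * Q ^ s) \<noteq> 0"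
    using H by (simp_all flip: power_Suc power_add)
  have "chu_term a b Q s (Suc m) * (1 - Q ^ Suc m) * ?g - chu_term a b Q s m * (1 - Q ^ m) * ?g
      = chu_term a b Q s m - chu_term a b Q (Suc s) m"
    unfolding chu_term_def qpoch_Suc add_Suc add_Suc_right power_add power_Suc
    by (rule telescope_step_identity[OF ab qpoch_self_nonzero[OF H] qpoch_self_nonzero[OF H]])
       (use a1 bs n1 n2 in auto)
  then show ?case using Suc.IH by (simp add: algebra_simps)
qed

lemma chu_sum_shift:
  assumes "a * b = Q" "a \<noteq> 1" "b * Q ^ s \<noteq> 1" "\<forall>m>0. Q ^ m \<noteq> (1::ratfun)"
    and "chu_term a b Q s (Suc n) = 0"
  shows "(\<Sum>k<Suc n. chu_term a b Q s k) = (\<Sum>k<Suc n. chu_term a b Q (Suc s) k)"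
  using chu_term_telescope[OF assms(1-4), of "Suc n"] assms(5) by (simp add: sum_subtractf)

lemma chu_sum_left:
  assumes n: "0 < n" and H: "\<forall>m>0. Q ^ m \<noteq> (1::ratfun)" and Q0: "Q \<noteq> 0"
  shows "(\<Sum>k<Suc n. chu_term (inverse (Q ^ n)) (Q ^ Suc n) Q s k)
       = (\<Sum>k<Suc n. chu_term (inverse (Q ^ n)) (Q ^ Suc n) Q 0 k)"
proof (induction s)
  case 0
  then show ?case by simp
next
  case (Suc s)
  have "(\<Sum>k<Suc n. chu_term (inverse (Q ^ n)) (Q ^ Suc n) Q s k)
      = (\<Sum>k<Suc n. chu_term (inverse (Q ^ n)) (Q ^ Suc n) Q (Suc s) k)"
  proof (rule chu_sum_shift[OF _ _ _ H])
    show "inverse (Q ^ n) * Q ^ Suc n = Q" using Q0 by (simp add: field_simps)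
    show "inverse (Q ^ n) \<noteq> 1" using H n by (metis inverse_1 inverse_inverse_eq)
    show "Q ^ Suc n * Q ^ s \<noteq> 1" using H by (metis power_add zero_less_Suc add_Suc)
    show "chu_term (inverse (Q ^ n)) (Q ^ Suc n) Q s (Suc n) = 0"
      unfolding chu_term_def using qpoch_inverse_power_zero[OF Q0, of n "Suc n"] by simp
  qed
  then show ?case using Suc.IH by simp
qed

text \<open>For \<open>a = Q^{n+1}\<close>, \<open>b = Q^{-n}\<close> and \<open>s \<le> n\<close> the sum equals its value at \<open>s = n\<close>,
  where only the term \<open>k = 0\<close> survives.\<close>

lemma chu_sum_right:
  assumes H: "\<forall>m>0. Q ^ m \<noteq> (1::ratfun)" and Q0: "Q \<noteq> 0" and s: "s \<le> n"
  shows "(\<Sum>k<Suc n. chu_term (Q ^ Suc n) (inverse (Q ^ n)) Q s k)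
       = qpoch (inverse (Q ^ n)) Q n / qpoch Q Q n"
  using s
proof (induction s rule: inc_induct)
  case base
  have "chu_term (Q ^ Suc n) (inverse (Q ^ n)) Q n (Suc i) = 0" for i
    unfolding chu_term_def using qpoch_inverse_power_zero[OF Q0, of n "Suc i + n"] by simp
  then have "(\<Sum>k<Suc n. chu_term (Q ^ Suc n) (inverse (Q ^ n)) Q n k)
      = chu_term (Q ^ Suc n) (inverse (Q ^ n)) Q n 0"
    unfolding sum.lessThan_Suc_shift by simp
  then show ?case by (simp add: chu_term_def)
next
  case (step s)
  have "(\<Sum>k<Suc n. chu_term (Q ^ Suc n) (inverse (Q ^ n)) Q s k)
      = (\<Sum>k<Suc n. chu_term (Q ^ Suc n) (inverse (Q ^ n)) Q (Suc s) k)"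
  proof (rule chu_sum_shift[OF _ _ _ H])
    show "Q ^ Suc n * inverse (Q ^ n) = Q" using Q0 by (simp add: field_simps)
    show "Q ^ Suc n \<noteq> 1" using H by blast
    show "inverse (Q ^ n) * Q ^ s \<noteq> 1"
    proof
      assume "inverse (Q ^ n) * Q ^ s = 1"
      then have "Q ^ s * Q ^ (n - s) = Q ^ s * 1"
        using Q0 step(2) by (simp add: field_simps flip: power_add)
      then have "Q ^ (n - s) = 1" using Q0 by simp
      then show False using H step(2) by auto
    qed
    show "chu_term (Q ^ Suc n) (inverse (Q ^ n)) Q s (Suc n) = 0"
      unfolding chu_term_def using qpoch_inverse_power_zero[OF Q0, of n "Suc n + s"] by simp
  qed
  then show ?case using step(3) by simp
qed

lemma chu_sums_closed_form:
  fixes z :: ratfun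
  assumes z0: "z \<noteq> 0" and H: "\<forall>m>0. (z\<^sup>2) ^ m \<noteq> 1" and n: "0 < n" and s: "s \<le> n"
  shows "(\<Sum>k<Suc n. chu_term ((z\<^sup>2) ^ Suc n) (inverse ((z\<^sup>2) ^ n)) (z\<^sup>2) s k) = (-1) ^ n / z ^ (n * (n + 1))"
    and "(\<Sum>k<Suc n. chu_term (inverse ((z\<^sup>2) ^ n)) ((z\<^sup>2) ^ Suc n) (z\<^sup>2) s k) = (-1) ^ n / z ^ (n * (n + 1))"
proof -
  have Q0: "z\<^sup>2 \<noteq> 0" using z0 by simp
  have closed: "qpoch (inverse ((z\<^sup>2) ^ n)) (z\<^sup>2) n / qpoch (z\<^sup>2) (z\<^sup>2) n = (-1) ^ n / z ^ (n * (n + 1))"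
    using qpoch_self_nonzero[OF H, of n] by (simp add: qpoch_inverse_power_closed_form[OF z0])
  have right: "(\<Sum>k<Suc n. chu_term ((z\<^sup>2) ^ Suc n) (inverse ((z\<^sup>2) ^ n)) (z\<^sup>2) s k) = (-1) ^ n / z ^ (n * (n + 1))"
    if "s \<le> n" for s
    using chu_sum_right[OF H Q0 that] closed by simp
  then show "(\<Sum>k<Suc n. chu_term ((z\<^sup>2) ^ Suc n) (inverse ((z\<^sup>2) ^ n)) (z\<^sup>2) s k) = (-1) ^ n / z ^ (n * (n + 1))"
    using s .
  have "(\<Sum>k<Suc n. chu_term (inverse ((z\<^sup>2) ^ n)) ((z\<^sup>2) ^ Suc n) (z\<^sup>2) s k)
      = (\<Sum>k<Suc n. chu_term (inverse ((z\<^sup>2) ^ n)) ((z\<^sup>2) ^ Suc n) (z\<^sup>2) 0 k)"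
    by (rule chu_sum_left[OF n H Q0])
  also have "\<dots> = (\<Sum>k<Suc n. chu_term ((z\<^sup>2) ^ Suc n) (inverse ((z\<^sup>2) ^ n)) (z\<^sup>2) 0 k)"
    by (simp add: chu_term_def mult.commute)
  also have "\<dots> = (-1) ^ n / z ^ (n * (n + 1))"
    by (rule right) simp
  finally show "(\<Sum>k<Suc n. chu_term (inverse ((z\<^sup>2) ^ n)) ((z\<^sup>2) ^ Suc n) (z\<^sup>2) s k) = (-1) ^ n / z ^ (n * (n + 1))" .
qed

section \<open>Congruences in the localisation at a polynomial\<close>

lemma to_fract_power: "to_fract (a ^ m) = to_fract a ^ m"
  by (induction m) simp_all

text \<open>An element of the fraction field is \<open>M\<close>-integral if it can be written with a denominator
  coprime to \<open>M\<close>; these elements form a subring (the localisation at \<open>M\<close>), in which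
  congruences modulo divisors of powers of \<open>M\<close> make sense.\<close>

definition loc_integral :: "'a::{ring_gcd,idom_divide,semiring_gcd_mult_normalize} \<Rightarrow> 'a fract \<Rightarrow> bool" where
  "loc_integral M x \<longleftrightarrow> (\<exists>a b. b \<noteq> 0 \<and> coprime b M \<and> x = to_fract a / to_fract b)"

lemma loc_integralE:
  assumes "loc_integral M x"
  obtains a b where "b \<noteq> 0" "coprime b M" "x = to_fract a / to_fract b"
  using assms unfolding loc_integral_def by blast

lemma loc_integral_to_fract [simp]: "loc_integral M (to_fract a)"
  unfolding loc_integral_def by (rule exI[of _ a], rule exI[of _ 1]) simp

lemma loc_integral_0 [simp]: "loc_integral M 0"
  using loc_integral_to_fract[of M 0] by simp

lemma loc_integral_1 [simp]: "loc_integral M 1"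
  using loc_integral_to_fract[of M 1] by simp

lemma loc_integral_inverse:
  "b \<noteq> 0 \<Longrightarrow> coprime b M \<Longrightarrow> loc_integral M (inverse (to_fract b))"
  unfolding loc_integral_def by (rule exI[of _ 1], rule exI[of _ b]) (simp add: divide_inverse)

lemma loc_integral_add:
  assumes "loc_integral M x" "loc_integral M y"
  shows "loc_integral M (x + y)"
proof -
  obtain a b where ab: "b \<noteq> 0" "coprime b M" "x = to_fract a / to_fract b"
    using assms(1) by (rule loc_integralE)
  obtain c d where cd: "d \<noteq> 0" "coprime d M" "y = to_fract c / to_fract d"
    using assms(2) by (rule loc_integralE)
  have "x + y = to_fract (a * d + c * b) / to_fract (b * d)"
    using ab cd by (simp add: field_simps)
  then show ?thesis
    unfolding loc_integral_def using ab cd by (intro exI[of _ "a * d + c * b"] exI[of _ "b * d"]) simp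
qed

lemma loc_integral_mult:
  assumes "loc_integral M x" "loc_integral M y"
  shows "loc_integral M (x * y)"
proof -
  obtain a b where ab: "b \<noteq> 0" "coprime b M" "x = to_fract a / to_fract b"
    using assms(1) by (rule loc_integralE)
  obtain c d where cd: "d \<noteq> 0" "coprime d M" "y = to_fract c / to_fract d"
    using assms(2) by (rule loc_integralE)
  have "x * y = to_fract (a * c) / to_fract (b * d)"
    using ab cd by (simp add: field_simps)
  then show ?thesis
    unfolding loc_integral_def using ab cd by (intro exI[of _ "a * c"] exI[of _ "b * d"]) simp
qed

lemma loc_integral_uminus: "loc_integral M x \<Longrightarrow> loc_integral M (- x)"
  using loc_integral_mult[OF loc_integral_to_fract[of M "-1"]] by simp

lemma loc_integral_diff: "loc_integral M x \<Longrightarrow> loc_integral M y \<Longrightarrow> loc_integral M (x - y)"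
  using loc_integral_add[of M x "- y"] loc_integral_uminus[of M y] by simp

lemma loc_integral_power: "loc_integral M x \<Longrightarrow> loc_integral M (x ^ m)"
  by (induction m) (auto intro: loc_integral_mult)

lemma quot_of_fract_cross_eq:
  assumes "b \<noteq> 0" "x = to_fract a / to_fract b"
  shows "fst (quot_of_fract x) * b = a * snd (quot_of_fract x)"
proof -
  have x: "x = to_fract (fst (quot_of_fract x)) / to_fract (snd (quot_of_fract x))"
    by (metis Fract_conv_to_fract Fract_quot_of_fract)
  have "to_fract (fst (quot_of_fract x)) * to_fract b = to_fract a * to_fract (snd (quot_of_fract x))"
    using assms by (subst (asm) x) (simp add: field_simps)
  then show ?thesis by (simp flip: to_fract_mult)
qed

lemma loc_integral_denominator:
  assumes "loc_integral M x"
  shows "coprime (snd (quot_of_fract x)) M"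
proof -
  obtain a b where ab: "b \<noteq> 0" "coprime b M" "x = to_fract a / to_fract b"
    using assms by (rule loc_integralE)
  have "snd (quot_of_fract x) dvd fst (quot_of_fract x) * b"
    unfolding quot_of_fract_cross_eq[OF ab(1,3)] by simp
  then have "snd (quot_of_fract x) dvd b"
    using coprime_quot_of_fract[of x] by (simp add: coprime_commute coprime_dvd_mult_right_iff)
  then show ?thesis using ab(2) by (meson coprime_divisors dvd_refl)
qed

lemma dvd_reduced_numerator:
  assumes "b \<noteq> 0" "coprime b M" "x = to_fract a / to_fract b" "M dvd a"
  shows "M dvd fst (quot_of_fract x)"
proof -
  have "M dvd fst (quot_of_fract x) * b"
    unfolding quot_of_fract_cross_eq[OF assms(1,3)] using assms(4) by simp
  then show ?thesis using assms(2) by (simp add: coprime_commute coprime_dvd_mult_left_iff)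
qed

text \<open>A congruence triple for the modulus \<open>d\<close>: \<open>x_1 \<equiv> x_0\<close> and \<open>x_2 \<equiv> x_0\<close> modulo \<open>d\<close>, and
  \<open>x_1 + x_2 \<equiv> 2 x_0\<close> modulo \<open>d^2\<close>, all in the ring of \<open>M\<close>-integral elements. Typically
  \<open>x_1, x_2\<close> arise from \<open>x_0\<close> by deforming a parameter \<open>a\<close> to \<open>au\<close> and \<open>a/u\<close>,
  where \<open>d = 1 - u\<close>.\<close>

definition congr_triple ::
    "'a::{ring_gcd,idom_divide,semiring_gcd_mult_normalize} \<Rightarrow> 'a fract \<Rightarrow> 'a fract \<Rightarrow> 'a fract \<Rightarrow> 'a fract \<Rightarrow> bool" where
  "congr_triple M d x\<^sub>0 x\<^sub>1 x\<^sub>2 \<longleftrightarrow> loc_integral M d \<and> loc_integral M x\<^sub>0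
     \<and> loc_integral M ((x\<^sub>1 - x\<^sub>0) / d) \<and> loc_integral M ((x\<^sub>2 - x\<^sub>0) / d)
     \<and> loc_integral M ((x\<^sub>1 + x\<^sub>2 - 2 * x\<^sub>0) / d\<^sup>2)"

lemma congr_triple_const: "loc_integral M d \<Longrightarrow> loc_integral M c \<Longrightarrow> congr_triple M d c c c"
  unfolding congr_triple_def by simp

lemma congr_triple_swap: "congr_triple M d x\<^sub>0 x\<^sub>1 x\<^sub>2 \<Longrightarrow> congr_triple M d x\<^sub>0 x\<^sub>2 x\<^sub>1"
  unfolding congr_triple_def by (simp add: add.commute)

lemma congr_triple_add:
  assumes "congr_triple M d a\<^sub>0 a\<^sub>1 a\<^sub>2" "congr_triple M d b\<^sub>0 b\<^sub>1 b\<^sub>2"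
  shows "congr_triple M d (a\<^sub>0 + b\<^sub>0) (a\<^sub>1 + b\<^sub>1) (a\<^sub>2 + b\<^sub>2)"
proof -
  have "(a\<^sub>1 + b\<^sub>1 - (a\<^sub>0 + b\<^sub>0)) / d = (a\<^sub>1 - a\<^sub>0) / d + (b\<^sub>1 - b\<^sub>0) / d"
    and "(a\<^sub>2 + b\<^sub>2 - (a\<^sub>0 + b\<^sub>0)) / d = (a\<^sub>2 - a\<^sub>0) / d + (b\<^sub>2 - b\<^sub>0) / d"
    and "(a\<^sub>1 + b\<^sub>1 + (a\<^sub>2 + b\<^sub>2) - 2 * (a\<^sub>0 + b\<^sub>0)) / d\<^sup>2
         = (a\<^sub>1 + a\<^sub>2 - 2 * a\<^sub>0) / d\<^sup>2 + (b\<^sub>1 + b\<^sub>2 - 2 * b\<^sub>0) / d\<^sup>2"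
    by (simp_all add: diff_divide_distrib add_divide_distrib algebra_simps)
  then show ?thesis using assms unfolding congr_triple_def by (auto intro: loc_integral_add)
qed

lemma congr_triple_mult:
  assumes A: "congr_triple M d a\<^sub>0 a\<^sub>1 a\<^sub>2" and B: "congr_triple M d b\<^sub>0 b\<^sub>1 b\<^sub>2" and d0: "d \<noteq> 0"
  shows "congr_triple M d (a\<^sub>0 * b\<^sub>0) (a\<^sub>1 * b\<^sub>1) (a\<^sub>2 * b\<^sub>2)"
proof -
  define e\<^sub>1 e\<^sub>2 f\<^sub>1 f\<^sub>2 where "e\<^sub>1 = (a\<^sub>1 - a\<^sub>0) / d" "e\<^sub>2 = (a\<^sub>2 - a\<^sub>0) / d"
    "f\<^sub>1 = (b\<^sub>1 - b\<^sub>0) / d" "f\<^sub>2 = (b\<^sub>2 - b\<^sub>0) / d"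
  define g h where "g = (a\<^sub>1 + a\<^sub>2 - 2 * a\<^sub>0) / d\<^sup>2" "h = (b\<^sub>1 + b\<^sub>2 - 2 * b\<^sub>0) / d\<^sup>2"
  have a: "a\<^sub>1 = a\<^sub>0 + d * e\<^sub>1" "a\<^sub>2 = a\<^sub>0 + d * e\<^sub>2" and b: "b\<^sub>1 = b\<^sub>0 + d * f\<^sub>1" "b\<^sub>2 = b\<^sub>0 + d * f\<^sub>2"
    using d0 unfolding e\<^sub>1_e\<^sub>2_f\<^sub>1_f\<^sub>2_def by simp_all
  have eg: "e\<^sub>1 + e\<^sub>2 = d * g" and fh: "f\<^sub>1 + f\<^sub>2 = d * h"
    using d0 unfolding g_h_def e\<^sub>1_e\<^sub>2_f\<^sub>1_f\<^sub>2_def by (simp_all add: field_simps power2_eq_square)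
  have r1: "(a\<^sub>1 * b\<^sub>1 - a\<^sub>0 * b\<^sub>0) / d = a\<^sub>0 * f\<^sub>1 + b\<^sub>0 * e\<^sub>1 + d * e\<^sub>1 * f\<^sub>1"
    and r2: "(a\<^sub>2 * b\<^sub>2 - a\<^sub>0 * b\<^sub>0) / d = a\<^sub>0 * f\<^sub>2 + b\<^sub>0 * e\<^sub>2 + d * e\<^sub>2 * f\<^sub>2"
    unfolding a b using d0 by (simp_all add: field_simps)
  have "a\<^sub>1 * b\<^sub>1 + a\<^sub>2 * b\<^sub>2 - 2 * (a\<^sub>0 * b\<^sub>0) = d * (a\<^sub>0 * (f\<^sub>1 + f\<^sub>2) + b\<^sub>0 * (e\<^sub>1 + e\<^sub>2)) + d\<^sup>2 * (e\<^sub>1 * f\<^sub>1 + e\<^sub>2 * f\<^sub>2)"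
    unfolding a b by (simp add: algebra_simps power2_eq_square)
  also have "\<dots> = d\<^sup>2 * (a\<^sub>0 * h + b\<^sub>0 * g + e\<^sub>1 * f\<^sub>1 + e\<^sub>2 * f\<^sub>2)"
    unfolding eg fh by (simp add: algebra_simps power2_eq_square)
  finally have r3: "(a\<^sub>1 * b\<^sub>1 + a\<^sub>2 * b\<^sub>2 - 2 * (a\<^sub>0 * b\<^sub>0)) / d\<^sup>2 = a\<^sub>0 * h + b\<^sub>0 * g + e\<^sub>1 * f\<^sub>1 + e\<^sub>2 * f\<^sub>2"
    using d0 by simp
  have "loc_integral M d" "loc_integral M a\<^sub>0" "loc_integral M b\<^sub>0" "loc_integral M e\<^sub>1"
    "loc_integral M e\<^sub>2" "loc_integral M f\<^sub>1" "loc_integral M f\<^sub>2" "loc_integral M g" "loc_integral M h"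
    using A B unfolding congr_triple_def e\<^sub>1_e\<^sub>2_f\<^sub>1_f\<^sub>2_def g_h_def by auto
  then show ?thesis
    unfolding congr_triple_def r1 r2 r3 by (auto intro!: loc_integral_add loc_integral_mult)
qed

lemma congr_triple_prod:
  assumes "loc_integral M d" "d \<noteq> 0" "\<And>i. i \<in> A \<Longrightarrow> congr_triple M d (f\<^sub>0 i) (f\<^sub>1 i) (f\<^sub>2 i)"
  shows "congr_triple M d (\<Prod>i\<in>A. f\<^sub>0 i) (\<Prod>i\<in>A. f\<^sub>1 i) (\<Prod>i\<in>A. f\<^sub>2 i)"
  using assms(3)
  by (induction A rule: infinite_finite_induct)
     (simp_all add: congr_triple_const[OF assms(1)] congr_triple_mult assms(2))

lemma congr_triple_sum:
  assumes "loc_integral M d" "\<And>i. i \<in> A \<Longrightarrow> congr_triple M d (f\<^sub>0 i) (f\<^sub>1 i) (f\<^sub>2 i)"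
  shows "congr_triple M d (\<Sum>i\<in>A. f\<^sub>0 i) (\<Sum>i\<in>A. f\<^sub>1 i) (\<Sum>i\<in>A. f\<^sub>2 i)"
  using assms(2)
  by (induction A rule: infinite_finite_induct)
     (simp_all add: congr_triple_const[OF assms(1)] congr_triple_add)

text \<open>The basic triple: deforming \<open>x\<close> to \<open>ux\<close> and \<open>x/u\<close> in the factor \<open>1 - x\<close>;
  here \<open>(1 - ux) + (1 - x/u) - 2(1 - x) = -(x/u)(1 - u)^2\<close>.\<close>

lemma congr_triple_linear_factor:
  assumes "loc_integral M (1 - u)" "loc_integral M x" "loc_integral M (inverse u)"
    and u0: "u \<noteq> 0" and u1: "1 - u \<noteq> 0"
  shows "congr_triple M (1 - u) (1 - x) (1 - u * x) (1 - x * inverse u)"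
proof -
  have "((1 - u * x) - (1 - x)) / (1 - u) = x"
    and "((1 - x * inverse u) - (1 - x)) / (1 - u) = - (x * inverse u)"
    using u0 u1 by (simp_all add: field_simps)
  moreover have "(1 - u * x) + (1 - x * inverse u) - 2 * (1 - x) = - (x * inverse u) * (1 - u)\<^sup>2"
    using u0 by (simp add: field_simps power2_eq_square)
  then have "((1 - u * x) + (1 - x * inverse u) - 2 * (1 - x)) / (1 - u)\<^sup>2 = - (x * inverse u)"
    using u1 by simp
  ultimately show ?thesis
    using assms unfolding congr_triple_def
    by (auto intro!: loc_integral_uminus loc_integral_mult loc_integral_diff)
qed

text \<open>Microscoping: if both deformations of \<open>x\<close> take the same value \<open>c\<close>, then
  \<open>2x \<equiv> 2c\<close> modulo \<open>d^2\<close>, hence \<open>x \<equiv> c\<close> modulo \<open>M^2\<close> for every factor \<open>M\<close> of \<open>d\<close>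
  prime to \<open>2\<close>.\<close>

lemma congr_triple_square_dvd:
  assumes T: "congr_triple M (to_fract D) x c c" and D0: "D \<noteq> 0" and MD: "M dvd D"
    and two: "coprime 2 M"
  shows "M\<^sup>2 dvd fst (quot_of_fract (x - c))"
proof (cases "(2::'a) = 0")
  case True
  then have "is_unit (M\<^sup>2)" using two by (simp add: is_unit_power_iff)
  then show ?thesis by (rule unit_imp_dvd)
next
  case False
  define d where "d = to_fract D"
  have d0: "d \<noteq> 0" unfolding d_def using D0 by simp
  have two_fract: "to_fract (2::'a) = 2"
    using to_fract_add[of "1::'a" 1] by simp
  have two0: "(2::'a fract) \<noteq> 0"
    using False by (metis two_fract to_fract_eq_0_iff)
  have "loc_integral M ((c + c - 2 * x) / d\<^sup>2)"
    using T unfolding congr_triple_def d_def by simp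
  moreover have "loc_integral M (inverse (to_fract (2::'a)))"
    using False two by (rule loc_integral_inverse)
  moreover have "(x - c) / d\<^sup>2 = - (((c + c - 2 * x) / d\<^sup>2) * inverse (to_fract 2))"
    unfolding two_fract using d0 two0 by (simp add: field_simps)
  ultimately have "loc_integral M ((x - c) / d\<^sup>2)"
    by (metis loc_integral_mult loc_integral_uminus)
  then obtain a b where ab: "b \<noteq> 0" "coprime b M" "(x - c) / d\<^sup>2 = to_fract a / to_fract b"
    by (rule loc_integralE)
  have "x - c = d\<^sup>2 * ((x - c) / d\<^sup>2)" using d0 by simp
  also have "\<dots> = to_fract (D\<^sup>2 * a) / to_fract b"
    unfolding ab(3) unfolding d_def by (simp only: to_fract_mult to_fract_power times_divide_eq_right)
  finally have "x - c = to_fract (D\<^sup>2 * a) / to_fract b" .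
  moreover have "M\<^sup>2 dvd D\<^sup>2 * a" using MD by (intro dvd_mult2 dvd_power_same)
  moreover have "coprime b (M\<^sup>2)" using ab(2) by simp
  ultimately show ?thesis using dvd_reduced_numerator[OF ab(1)] by blast
qed

lemma congr_triple_qpoch:
  fixes M :: "rat poly"
  assumes "loc_integral M (1 - u)" "loc_integral M x" "loc_integral M Q" "loc_integral M (inverse u)"
    and "u \<noteq> 0" "1 - u \<noteq> 0"
  shows "congr_triple M (1 - u) (qpoch x Q m) (qpoch (u * x) Q m) (qpoch (x * inverse u) Q m)"
  unfolding qpoch_def
proof (rule congr_triple_prod[OF assms(1,6)])
  fix i
  have "congr_triple M (1 - u) (1 - x * Q ^ i) (1 - u * (x * Q ^ i)) (1 - x * Q ^ i * inverse u)"
    using assms by (intro congr_triple_linear_factor loc_integral_mult loc_integral_power) auto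
  then show "congr_triple M (1 - u) (1 - x * Q ^ i) (1 - u * x * Q ^ i) (1 - x * inverse u * Q ^ i)"
    by (simp add: ac_simps)
qed

section \<open>Arithmetic of \<open>q\<close> and \<open>[p]\<close>\<close>

lemma qv_power: "qv ^ m = to_fract ([:0, 1:] ^ m)"
  unfolding qv_def by (simp add: to_fract_power)

lemma qint_factor: "1 - [:0, 1:] ^ p = (1 - [:0, 1:]) * qint p"
  unfolding qint_def by (rule one_diff_power_eq)

text \<open>\<open>q\<close> is nonzero and not a root of unity (evaluate \<open>q^k\<close> at \<open>2\<close>).\<close>

lemma X_power_ne_1:
  assumes "0 < k"
  shows "[:0, 1::rat:] ^ k \<noteq> 1"
proof
  assume "[:0, 1::rat:] ^ k = 1"
  then have "poly ([:0, 1::rat:] ^ k) 2 = 1" by simp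
  then have "(2::rat) ^ k = 1" by simp
  moreover have "(1::rat) < 2 ^ k" using assms by (intro one_less_power) auto
  ultimately show False by simp
qed

lemma qv_nonzero: "qv \<noteq> 0"
  unfolding qv_def by simp

lemma qv_power_ne_1: "0 < k \<Longrightarrow> qv ^ k \<noteq> 1"
  unfolding qv_power by (metis X_power_ne_1 to_fract_1 to_fract_eq_iff)

text \<open>\<open>q\<close> is prime to \<open>[p]\<close>, since \<open>[p] \<equiv> 1\<close> modulo \<open>q\<close>.\<close>

lemma coprime_X_qint:
  assumes "0 < p"
  shows "coprime [:0, 1::rat:] (qint p)"
proof (rule coprimeI)
  fix c assume c1: "c dvd [:0, 1::rat:]" and c2: "c dvd qint p"
  have "[qint p = (\<Sum>i<p. 0 ^ i)] (mod c)"
    unfolding qint_def using c1 by (intro cong_sum cong_pow) (simp add: cong_0_iff)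
  moreover have "(\<Sum>i<p. (0::rat poly) ^ i) = 1"
    using assms by (cases p) (simp_all add: sum.lessThan_Suc_shift del: sum.lessThan_Suc)
  ultimately show "c dvd 1" using c2 by (simp add: cong_dvd_iff)
qed

text \<open>If the prime \<open>p\<close> does not divide \<open>j\<close>, then \<open>1 - q^j\<close> is prime to \<open>[p]\<close>:
  modulo a common divisor \<open>c\<close> we have \<open>q^j \<equiv> q^p \<equiv> 1\<close>, hence (Bezout) \<open>q \<equiv> 1\<close> and so
  \<open>[p] \<equiv> p\<close>, a unit.\<close>

lemma coprime_one_minus_X_power_qint:
  assumes pr: "prime p" and nd: "\<not> p dvd j"
  shows "coprime (1 - [:0, 1:] ^ j) (qint p)"
proof (rule coprimeI)
  let ?X = "[:0, 1::rat:]"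
  fix c assume c1: "c dvd 1 - ?X ^ j" and c2: "c dvd qint p"
  have j0: "j \<noteq> 0" using nd by (metis dvd_0_right)
  have "gcd j p = 1" using prime_imp_coprime[OF pr nd] by (simp add: coprime_commute)
  then obtain a b where ab: "j * a = p * b + 1" using bezout_nat[OF j0, of p] by auto
  have Xj: "[?X ^ j = 1] (mod c)" using c1 by (simp add: cong_iff_dvd_diff dvd_diff_commute)
  have Xp: "[?X ^ p = 1] (mod c)"
    using c2 unfolding cong_iff_dvd_diff power_diff_1_eq qint_def by (rule dvd_mult)
  have "?X * (?X ^ p) ^ b = (?X ^ j) ^ a" by (simp flip: power_mult add: ab power_add)
  moreover have "[(?X ^ j) ^ a = 1] (mod c)" using cong_pow[OF Xj, of a] by simp
  moreover have "[?X * (?X ^ p) ^ b = ?X] (mod c)"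
    using cong_mult[OF cong_refl[of ?X] cong_pow[OF Xp, of b]] by (simp only: power_one mult_1_right)
  ultimately have X1: "[?X = 1] (mod c)" by (metis cong_sym cong_trans)
  have "[qint p = (\<Sum>i<p. 1 ^ i)] (mod c)"
    unfolding qint_def by (intro cong_sum cong_pow X1)
  then have "c dvd of_nat p" using c2 by (simp add: cong_dvd_iff)
  moreover have "is_unit (of_nat p :: rat poly)"
    unfolding of_nat_poly is_unit_const_poly_iff using prime_gt_0_nat[OF pr] by (simp add: dvd_field_iff)
  ultimately show "is_unit c" using dvd_unit_imp_unit by blast
qed

text \<open>The denominators \<open>(q^2;q^2)_j\<close>, \<open>j < p\<close>, are prime to \<open>[p]\<close>, since no exponent
  \<open>2i\<close> with \<open>0 < i < p\<close> is divisible by the odd prime \<open>p\<close>.\<close>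

lemma loc_integral_inverse_qpoch_qv:
  assumes pr: "prime p" and od: "odd p" and j: "j < p"
  shows "loc_integral (qint p) (inverse (qpoch (qv ^ 2) (qv ^ 2) j))"
  using j
proof (induction j)
  case 0
  then show ?case by simp
next
  case (Suc j)
  have "\<not> p dvd 2" using od prime_ge_2_nat[OF pr] by (auto dest: dvd_imp_le)
  moreover have "\<not> p dvd Suc j" using Suc.prems by (auto dest: dvd_imp_le)
  ultimately have "\<not> p dvd 2 * Suc j" using pr prime_dvd_mult_iff by blast
  then have cop: "coprime (1 - [:0, 1:] ^ (2 * Suc j)) (qint p)"
    by (rule coprime_one_minus_X_power_qint[OF pr])
  have "0 < 2 * Suc j" by simp
  then have ne: "1 - [:0, 1::rat:] ^ (2 * Suc j) \<noteq> 0"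
    using X_power_ne_1 by (metis right_minus_eq)
  have "qv ^ 2 * (qv ^ 2) ^ j = qv ^ (2 * Suc j)"
    by (simp only: power_Suc[symmetric] power_mult)
  then have "1 - qv ^ 2 * (qv ^ 2) ^ j = to_fract (1 - [:0, 1:] ^ (2 * Suc j))"
    unfolding qv_power by simp
  then have "loc_integral (qint p) (inverse (1 - qv ^ 2 * (qv ^ 2) ^ j))"
    using loc_integral_inverse[OF ne cop] by simp
  then show ?case using Suc by (simp add: inverse_mult_distrib loc_integral_mult)
qed

lemma Legendre_minus_one:
  assumes pr: "prime p" and od: "odd p"
  shows "Legendre (-1) (int p) = (-1) ^ ((p - 1) div 2)"
proof -
  have p2: "2 < p" using prime_ge_2_nat[OF pr] od by (cases "p = 2") auto
  have "[Legendre (-1) (int p) = (-1) ^ ((p - 1) div 2)] (mod int p)"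
    using euler_criterion[OF pr p2, of "-1"] by simp
  then have dv: "int p dvd Legendre (-1) (int p) - (-1) ^ ((p - 1) div 2)"
    by (simp add: cong_iff_dvd_diff)
  have "\<not> [-1 = 0] (mod int p)"
    using p2 by (simp add: cong_0_iff)
  then have "Legendre (-1) (int p) \<in> {1, -1}"
    unfolding Legendre_def by auto
  moreover have "(-1::int) ^ ((p - 1) div 2) \<in> {1, -1}"
    by (metis insertCI neg_one_even_power neg_one_odd_power)
  moreover have "\<not> int p dvd 2" "\<not> int p dvd -2"
    using zdvd_imp_le[of "int p" 2] p2 by auto
  ultimately show ?thesis using dv by auto
qed

text \<open>The congruence triple for the sum of the theorem: its terms at \<open>a = b = q\<close> and at the
  deformations \<open>(Q^{n+1}, Q^{-n})\<close>, \<open>(Q^{-n}, Q^{n+1})\<close> form triples modulo \<open>1 - q^p\<close>,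
  the denominators \<open>(Q;Q)_j\<close> with \<open>j \<le> 2n\<close> being prime to \<open>[p]\<close>.\<close>

lemma congr_triple_chu_sum:
  fixes p n s :: nat
  assumes pr: "prime p" and pn: "p = 2 * n + 1" and sn: "s \<le> n"
  shows "congr_triple (qint p) (1 - qv ^ p) (\<Sum>k<Suc n. chu_term qv qv (qv\<^sup>2) s k)
     (\<Sum>k<Suc n. chu_term ((qv\<^sup>2) ^ Suc n) (inverse ((qv\<^sup>2) ^ n)) (qv\<^sup>2) s k)
     (\<Sum>k<Suc n. chu_term (inverse ((qv\<^sup>2) ^ n)) ((qv\<^sup>2) ^ Suc n) (qv\<^sup>2) s k)"
proof -
  define M Q u where "M = qint p" and "Q = (qv::ratfun)\<^sup>2" and "u = (qv::ratfun) ^ p"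
  have up: "u * qv = Q ^ Suc n"
    unfolding u_def Q_def power_mult[symmetric] pn by (simp add: power_add)
  have "u = Q ^ n * qv"
    unfolding u_def Q_def pn by (metis power_Suc2 power_mult Suc_eq_plus1)
  then have um: "qv * inverse u = inverse (Q ^ n)"
    using qv_nonzero by (simp add: Q_def)
  have u0: "u \<noteq> 0" and u1: "1 - u \<noteq> 0"
    unfolding u_def using qv_nonzero qv_power_ne_1[of p] pn by auto
  have cop: "coprime ([:0, 1:] ^ p) M"
    unfolding M_def using coprime_X_qint[of p] pn coprime_power_left_iff by blast
  have "loc_integral M (1 - to_fract ([:0, 1:] ^ p))"
    by (intro loc_integral_diff loc_integral_1 loc_integral_to_fract)
  then have ints: "loc_integral M (1 - u)" "loc_integral M qv" "loc_integral M Q" "loc_integral M (inverse u)"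
    unfolding u_def Q_def qv_power
    using loc_integral_inverse[OF _ cop] X_power_ne_1[of p] pn by (simp_all add: qv_def)
  have factor: "congr_triple M (1 - u) (qpoch qv Q m) (qpoch (Q ^ Suc n) Q m) (qpoch (inverse (Q ^ n)) Q m)"
    for m using congr_triple_qpoch[OF ints u0 u1, of m] unfolding up um .
  have "congr_triple M (1 - u) (chu_term qv qv Q s k) (chu_term (Q ^ Suc n) (inverse (Q ^ n)) Q s k)
      (chu_term (inverse (Q ^ n)) (Q ^ Suc n) Q s k)" if "k < Suc n" for k
  proof -
    have "loc_integral M (inverse (qpoch Q Q k * qpoch Q Q (k + s)))"
      unfolding inverse_mult_distrib M_def Q_def using that sn pn pr
      by (intro loc_integral_mult loc_integral_inverse_qpoch_qv) auto
    then show ?thesis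
      unfolding chu_term_def divide_inverse
      by (intro congr_triple_mult[OF congr_triple_mult[OF factor congr_triple_swap[OF factor]]]
          congr_triple_const ints(1) u1)
  qed
  then show ?thesis
    unfolding M_def[symmetric] Q_def[symmetric] u_def[symmetric]
    by (intro congr_triple_sum ints(1)) auto
qed

lemma qcong_of_congr_triple:
  fixes M D :: "rat poly"
  assumes T: "congr_triple M (to_fract D) x c c" and "D \<noteq> 0" "M dvd D" and c: "loc_integral M c"
  shows "qcong x c (M\<^sup>2)"
proof -
  have "is_unit (2 :: rat poly)"
    by (metis is_unit_const_poly_iff numeral_poly zero_neq_numeral dvd_field_iff)
  then have "M\<^sup>2 dvd fst (quot_of_fract (x - c))"
    using congr_triple_square_dvd[OF assms(1-3)] by (simp add: is_unit_left_imp_coprime)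
  moreover have "loc_integral M x" using T unfolding congr_triple_def by simp
  ultimately show ?thesis
    unfolding qcong_def using loc_integral_denominator[of M x] loc_integral_denominator[OF c] by simp
qed

theorem theorem2p6:
  fixes p s :: nat
  assumes "prime p" and "odd p" and "s \<le> (p - 1) div 2"
  shows "qcong
    (\<Sum>k = 0..(p - 1) div 2.
        (qpoch qv (qv ^ 2) k * qpoch qv (qv ^ 2) (k + s)) /
        (qpoch (qv ^ 2) (qv ^ 2) k * qpoch (qv ^ 2) (qv ^ 2) (k + s)))
    (of_int (Legendre (-1) (int p)) * qv powi ((1 - int p ^ 2) div 4))
    ((qint p) ^ 2)"
proof -
  define n where "n = (p - 1) div 2"
  have pn: "p = 2 * n + 1" and n: "0 < n" and sn: "s \<le> n"
    using assms prime_ge_2_nat[of p] unfolding n_def by (auto elim: oddE)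
  define c where "c = (-1) ^ n / qv ^ (n * (n + 1))"
  have H: "\<forall>m>0. (qv\<^sup>2) ^ m \<noteq> 1"
    using qv_power_ne_1 by (simp flip: power_mult)
  have T: "congr_triple (qint p) (to_fract (1 - [:0, 1:] ^ p)) (\<Sum>k<Suc n. chu_term qv qv (qv\<^sup>2) s k) c c"
    using congr_triple_chu_sum[OF assms(1) pn sn] chu_sums_closed_form[OF qv_nonzero H n sn]
    unfolding c_def by (simp add: qv_power)
  have c: "loc_integral (qint p) c"
    unfolding c_def qv_power divide_inverse
    using coprime_X_qint[of p] pn loc_integral_uminus[OF loc_integral_1]
    by (intro loc_integral_mult loc_integral_power loc_integral_inverse) auto
  have cong: "qcong (\<Sum>k<Suc n. chu_term qv qv (qv\<^sup>2) s k) c ((qint p)\<^sup>2)"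
    using X_power_ne_1[of p] pn qint_factor[of p] by (intro qcong_of_congr_triple[OF T _ _ c]) auto
  have exponent: "(1 - int p ^ 2) div 4 = - int (n * (n + 1))"
    unfolding pn by (simp add: algebra_simps power2_eq_square)
  have rhs: "of_int (Legendre (-1) (int p)) * qv powi ((1 - int p ^ 2) div 4) = c"
    unfolding exponent Legendre_minus_one[OF assms(1,2)] n_def[symmetric] c_def
      power_int_minus power_int_of_nat
    by (simp add: divide_inverse)
  show ?thesis
    unfolding rhs n_def[symmetric] using cong
    by (simp add: chu_term_def atLeast0AtMost lessThan_Suc_atMost)
qed

end
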